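(* Let $A,B\in\mathcal{M}_n$, let $\psi\colon H^*(M(A);\mathbb{Z})\to H^*(M(B);\mathbb{Z})$ be a graded ring isomorphism, and denote also by $\psi$ its rationalization $H^*(M(A);\mathbb{Q})\to H^*(M(B);\mathbb{Q})$. Let $\sigma$ be a permutation of $\{1,\dots,n\}$ and $q_1,\dots,q_n$ nonzero rationals with $\psi(y^A_j)=q_jy^B_{\sigma(j)}$ for all $j$ (such data exist). Then $q_j\in\{\pm\tfrac12,\pm1,\pm2\}$ for every $j$, and (1) $q_j\in\{\pm\tfrac12\}$ if and only if $\alpha^A_j\not\equiv0\pmod2$ and $\alpha^B_{\sigma(j)}\equiv0\pmod 2$; (2) $q_j\in\{\pm2\}$ if and only if $\alpha^A_j\equiv0\pmod2$ and $\alpha^B_{\sigma(j)}\not\equiv0\pmod2$. Moreover, if $q_j=\pm1$ for all $j$, then $\psi(p(M(A)))=p(M(B))$, where $p$ denotes the total Pontrjagin class.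
   Context: Let $\mathcal{M}_n$ be the set of integral strictly upper triangular $n\times n$ matrices $A=(A^i_j)$ ($A^i_j$ is the $(i,j)$ entry, and $A^i_j=0$ for $i\ge j$). For $A\in\mathcal{M}_n$, $M(A)$ denotes the Bott manifold obtained as the quotient of $(S^3)^n$ ($S^3\subset\mathbb{C}^2$ the unit sphere) by the free $(S^1)^n$-action $(g_1,\dots,g_n)\cdot((z_1,w_1),\dots,(z_n,w_n))=\big(((\prod_{k<j}g_k^{-A^k_j})g_jz_j,\ g_jw_j)\big)_{j=1}^n$. Let $x^A_j\in H^2(M(A);\mathbb{Z})$ be the first Chern class of the line bundle obtained as the quotient of $(S^3)^n\times\mathbb{C}$ where $g$ acts on the $\mathbb{C}$-factor by $g_j^{-1}$. Put $\alpha^A_j=\sum_{i<j}A^i_jx^A_i\in H^2(M(A);\mathbb{Z})$; congruences mod $2$ are taken in $H^2(M(A);\mathbb{Z})$ with basis $x^A_1,\dots,x^A_n$. Then $H^*(M(A);\mathbb{Z})=\mathbb{Z}[x^A_1,\dots,x^A_n]/((x^A_j)^2-\alpha^A_jx^A_j\mid j=1,\dots,n)$. Define $y^A_j=x^A_j-\tfrac12\alpha^A_j\in H^2(M(A);\mathbb{Q})$. The same notation is used for $B$. *)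

theory Defs
  imports Complex_Main "HOL-Library.Poly_Mapping" "HOL-Algebra.QuotRing"
begin

text \<open>Integral polynomials in the variables x_1, x_2, ... (monomials are finitely
supported exponent vectors nat =>0 nat).\<close>
type_synonym ipoly = "(nat \<Rightarrow>\<^sub>0 nat) \<Rightarrow>\<^sub>0 int"

definition Xv :: "nat \<Rightarrow> ipoly" where
  "Xv i = Poly_Mapping.single (Poly_Mapping.single i 1) 1"

definition polyR :: "nat \<Rightarrow> ipoly ring" where
  "polyR n = \<lparr>carrier = {p::ipoly. \<forall>m\<in>Poly_Mapping.keys p. Poly_Mapping.keys m \<subseteq> {1..n}},
              monoid.mult = (*), one = 1, zero = 0, add = (+)\<rparr>"

text \<open>M_n: integral strictly upper triangular n x n matrices, entries A i j, 1 <= i,j <= n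
  (all entries outside the index range are zero).\<close>
definition bott_mat :: "nat \<Rightarrow> (nat \<Rightarrow> nat \<Rightarrow> int) set" where
  "bott_mat n = {A. \<forall>i j. A i j \<noteq> 0 \<longrightarrow> 1 \<le> i \<and> i < j \<and> j \<le> n}"

definition alphaP :: "(nat \<Rightarrow> nat \<Rightarrow> int) \<Rightarrow> nat \<Rightarrow> ipoly" where
  "alphaP A j = (\<Sum>i\<in>{1..<j}. of_int (A i j) * Xv i)"

definition bott_ideal :: "nat \<Rightarrow> (nat \<Rightarrow> nat \<Rightarrow> int) \<Rightarrow> ipoly set" where
  "bott_ideal n A = genideal (polyR n) {Xv j * Xv j - alphaP A j * Xv j | j. j \<in> {1..n}}"

definition Hcoh :: "nat \<Rightarrow> (nat \<Rightarrow> nat \<Rightarrow> int) \<Rightarrow> ipoly set ring" where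
  "Hcoh n A = polyR n Quot bott_ideal n A"

definition cls :: "nat \<Rightarrow> (nat \<Rightarrow> nat \<Rightarrow> int) \<Rightarrow> ipoly \<Rightarrow> ipoly set" where
  "cls n A f = bott_ideal n A +>\<^bsub>polyR n\<^esub> f"

definition homog :: "nat \<Rightarrow> ipoly \<Rightarrow> bool" where
  "homog k f \<longleftrightarrow> (\<forall>m\<in>Poly_Mapping.keys f. (\<Sum>i\<in>Poly_Mapping.keys m. Poly_Mapping.lookup m i) = k)"

text \<open>Hdeg n A k = H^{2k}(M(A);Z) (x_j has cohomological degree 2).\<close>
definition Hdeg :: "nat \<Rightarrow> (nat \<Rightarrow> nat \<Rightarrow> int) \<Rightarrow> nat \<Rightarrow> ipoly set set" where
  "Hdeg n A k = {cls n A f | f. f \<in> carrier (polyR n) \<and> homog k f}"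

definition graded_ring_iso ::
  "nat \<Rightarrow> (nat \<Rightarrow> nat \<Rightarrow> int) \<Rightarrow> (nat \<Rightarrow> nat \<Rightarrow> int) \<Rightarrow> (ipoly set \<Rightarrow> ipoly set) \<Rightarrow> bool" where
  "graded_ring_iso n A B \<psi> \<longleftrightarrow>
     \<psi> \<in> ring_iso (Hcoh n A) (Hcoh n B) \<and> (\<forall>k. \<psi> ` Hdeg n A k = Hdeg n B k)"

text \<open>alpha^A_j = 0 mod 2 in H^2(M(A);Z) with basis x_1..x_n.\<close>
definition alpha_even :: "(nat \<Rightarrow> nat \<Rightarrow> int) \<Rightarrow> nat \<Rightarrow> bool" where
  "alpha_even A j \<longleftrightarrow> (\<forall>i. even (A i j))"

text \<open>Coefficient of x_k in y^A_j = x_j - alpha^A_j / 2 in H^2(M(A);Q).\<close>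
definition ycoef :: "(nat \<Rightarrow> nat \<Rightarrow> int) \<Rightarrow> nat \<Rightarrow> nat \<Rightarrow> rat" where
  "ycoef A j k = (if k = j then 1 else 0) - of_int (A k j) / 2"

text \<open>Total Pontrjagin class of M(A), via the formula p(M(A)) = prod_j (1 + (alpha^A_j)^2).\<close>
definition pontr :: "nat \<Rightarrow> (nat \<Rightarrow> nat \<Rightarrow> int) \<Rightarrow> ipoly set" where
  "pontr n A = cls n A (\<Prod>j\<in>{1..n}. 1 + alphaP A j ^ 2)"

end

theory Submission
  imports Defs
begin

text \<open>
  Both cohomology rings are quotients of \<open>\<int>[x\<^sub>1, \<dots>, x\<^sub>n]\<close> by relations of degree 2, so on \<open>H\<^sup>2\<close> the
  isomorphism \<open>\<psi>\<close> is given by an integer matrix \<open>c\<close> that is invertible over \<open>\<int>\<close>. Let \<open>a\<close> and \<open>b\<close> be the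
  integer coefficient vectors of \<open>2 y\<^sup>A\<^sub>j\<close> and \<open>2 y\<^sup>B\<^sub>\<sigma>\<^sub>(\<^sub>j\<^sub>)\<close>; the hypothesis on \<open>q\<^sub>j\<close> becomes \<open>2 a c = m b\<close>
  with \<open>q\<^sub>j = m / 2\<close>. An invertible integer matrix preserves the common divisors of the entries of a
  vector, and \<open>a\<close>, \<open>b\<close> each have an entry equal to 2, so their contents are 1 or 2 according as
  \<open>\<alpha>\<close> is odd or even; comparing contents on both sides gives \<open>\<bar>m\<bar> \<in> {1, 2, 4}\<close> together with (1)
  and (2). For the Pontrjagin class, the relation \<open>x\<^sub>j\<^sup>2 = \<alpha>\<^sub>j x\<^sub>j\<close> gives \<open>\<alpha>\<^sub>j\<^sup>2 = (2 x\<^sub>j - \<alpha>\<^sub>j)\<^sup>2 = 4 y\<^sub>j\<^sup>2\<close>,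
  so \<open>p(M(A)) = \<Prod>\<^sub>j (1 + 4 y\<^sub>j\<^sup>2)\<close>, which \<open>\<psi>\<close> carries to \<open>p(M(B))\<close> once every \<open>q\<^sub>j = \<plusminus>1\<close>.
\<close>

section \<open>The polynomial ring\<close>

lemma carrier_polyR:
  "carrier (polyR n) = {p. \<forall>m\<in>Poly_Mapping.keys p. Poly_Mapping.keys m \<subseteq> {1..n}}"
  by (simp add: polyR_def)

lemma polyR_simps [simp]:
  "monoid.mult (polyR n) = (*)" "one (polyR n) = 1" "zero (polyR n) = 0" "add (polyR n) = (+)"
  by (simp_all add: polyR_def)

lemma keys_add_monomial:
  "Poly_Mapping.keys ((a :: nat \<Rightarrow>\<^sub>0 nat) + b) = Poly_Mapping.keys a \<union> Poly_Mapping.keys b"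
  by (auto simp: in_keys_iff lookup_add)

lemma in_keys_add_ipoly:
  "m \<in> Poly_Mapping.keys ((p :: ipoly) + q) \<Longrightarrow> m \<in> Poly_Mapping.keys p \<or> m \<in> Poly_Mapping.keys q"
  using keys_add[of p q] by auto

lemma in_keys_mult_ipoly:
  "m \<in> Poly_Mapping.keys ((p :: ipoly) * q) \<Longrightarrow>
     \<exists>a b. m = a + b \<and> a \<in> Poly_Mapping.keys p \<and> b \<in> Poly_Mapping.keys q"
  using keys_mult[of p q] by auto

lemma of_int_ipoly: "(of_int a :: ipoly) = Poly_Mapping.single 0 a"
proof -
  have "Poly_Mapping.single 0 (of_int a :: int) = (of_int a :: ipoly)"
    by (rule single_of_int)
  then show ?thesis
    by simp
qed

lemma polyR_add_closed: "p \<in> carrier (polyR n) \<Longrightarrow> q \<in> carrier (polyR n) \<Longrightarrow> p + q \<in> carrier (polyR n)"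
  unfolding carrier_polyR mem_Collect_eq by (metis in_keys_add_ipoly)

lemma polyR_uminus_closed: "p \<in> carrier (polyR n) \<Longrightarrow> - p \<in> carrier (polyR n)"
  unfolding carrier_polyR by simp

lemma polyR_diff_closed: "p \<in> carrier (polyR n) \<Longrightarrow> q \<in> carrier (polyR n) \<Longrightarrow> p - q \<in> carrier (polyR n)"
  using polyR_add_closed[of p n "- q"] polyR_uminus_closed by simp

lemma polyR_mult_closed: "p \<in> carrier (polyR n) \<Longrightarrow> q \<in> carrier (polyR n) \<Longrightarrow> p * q \<in> carrier (polyR n)"
  unfolding carrier_polyR mem_Collect_eq
  by (metis in_keys_mult_ipoly keys_add_monomial Un_subset_iff)

lemma polyR_of_int_closed: "of_int a \<in> carrier (polyR n)"
  unfolding carrier_polyR of_int_ipoly by simp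

lemma polyR_zero_closed: "0 \<in> carrier (polyR n)"
  and polyR_one_closed: "1 \<in> carrier (polyR n)"
  unfolding carrier_polyR by auto

lemma polyR_Xv_closed: "i \<in> {1..n} \<Longrightarrow> Xv i \<in> carrier (polyR n)"
  unfolding carrier_polyR Xv_def by simp

lemma polyR_sum_closed: "(\<And>i. i \<in> S \<Longrightarrow> f i \<in> carrier (polyR n)) \<Longrightarrow> sum f S \<in> carrier (polyR n)"
  by (induction S rule: infinite_finite_induct) (auto simp: polyR_zero_closed polyR_add_closed)

lemma polyR_prod_closed: "(\<And>i. i \<in> S \<Longrightarrow> f i \<in> carrier (polyR n)) \<Longrightarrow> prod f S \<in> carrier (polyR n)"
  by (induction S rule: infinite_finite_induct) (auto simp: polyR_one_closed polyR_mult_closed)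

lemmas polyR_closed =
  polyR_add_closed polyR_diff_closed polyR_mult_closed polyR_of_int_closed
  polyR_zero_closed polyR_one_closed polyR_Xv_closed polyR_sum_closed polyR_prod_closed

lemma cring_polyR: "cring (polyR n)"
proof (rule cringI)
  show "abelian_group (polyR n)"
  proof (rule abelian_groupI)
    fix x assume "x \<in> carrier (polyR n)"
    then show "\<exists>y\<in>carrier (polyR n). y \<oplus>\<^bsub>polyR n\<^esub> x = \<zero>\<^bsub>polyR n\<^esub>"
      by (intro bexI[of _ "- x"]) (auto simp: polyR_uminus_closed)
  qed (auto simp: polyR_add_closed polyR_zero_closed add.assoc add.commute)
  show "comm_monoid (polyR n)"
    by (rule comm_monoidI) (auto simp: polyR_mult_closed polyR_one_closed mult.assoc mult.commute)
qed (auto simp: distrib_right)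

lemma ring_polyR: "ring (polyR n)"
  using cring_polyR cring.axioms(1) by blast

lemma a_inv_polyR: "p \<in> carrier (polyR n) \<Longrightarrow> a_inv (polyR n) p = - p"
  using abelian_group.minus_equality[of "polyR n" "- p" p] ring_polyR polyR_uminus_closed
  by (simp add: ring.is_abelian_group)

lemma a_minus_polyR:
  "p \<in> carrier (polyR n) \<Longrightarrow> q \<in> carrier (polyR n) \<Longrightarrow> a_minus (polyR n) p q = p - q"
  by (simp add: a_minus_def a_inv_polyR)

definition mdeg :: "(nat \<Rightarrow>\<^sub>0 nat) \<Rightarrow> nat" where
  "mdeg m = (\<Sum>i\<in>Poly_Mapping.keys m. Poly_Mapping.lookup m i)"

lemma mdeg_eq_sum: "finite S \<Longrightarrow> Poly_Mapping.keys m \<subseteq> S \<Longrightarrow> mdeg m = (\<Sum>i\<in>S. Poly_Mapping.lookup m i)"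
  unfolding mdeg_def by (rule sum.mono_neutral_left) (auto simp: in_keys_iff)

lemma mdeg_add: "mdeg (a + b) = mdeg a + mdeg b"
proof -
  let ?S = "Poly_Mapping.keys a \<union> Poly_Mapping.keys b"
  have "mdeg (a + b) = (\<Sum>i\<in>?S. Poly_Mapping.lookup (a + b) i)"
    by (rule mdeg_eq_sum) (auto simp: keys_add_monomial)
  also have "\<dots> = (\<Sum>i\<in>?S. Poly_Mapping.lookup a i) + (\<Sum>i\<in>?S. Poly_Mapping.lookup b i)"
    by (simp add: lookup_add sum.distrib)
  also have "\<dots> = mdeg a + mdeg b"
    by (simp add: mdeg_eq_sum[symmetric])
  finally show ?thesis .
qed

lemma mdeg_eq_1_iff: "mdeg m = 1 \<longleftrightarrow> (\<exists>i. m = Poly_Mapping.single i 1)"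
proof
  assume deg: "mdeg m = 1"
  then have "Poly_Mapping.keys m \<noteq> {}"
    by (auto simp: mdeg_def)
  then obtain i where i: "i \<in> Poly_Mapping.keys m"
    by blast
  have "mdeg m = Poly_Mapping.lookup m i + (\<Sum>k\<in>Poly_Mapping.keys m - {i}. Poly_Mapping.lookup m k)"
    unfolding mdeg_def using sum.remove[OF _ i] by simp
  moreover have "Poly_Mapping.lookup m i \<noteq> 0"
    using i by (simp add: in_keys_iff)
  ultimately have rest: "(\<Sum>k\<in>Poly_Mapping.keys m - {i}. Poly_Mapping.lookup m k) = 0"
    and one: "Poly_Mapping.lookup m i = 1"
    using deg by linarith+
  have "Poly_Mapping.lookup m k = 0" if "k \<noteq> i" for k
  proof (rule ccontr)
    assume "Poly_Mapping.lookup m k \<noteq> 0"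
    then have "k \<in> Poly_Mapping.keys m - {i}"
      using that by (simp add: in_keys_iff)
    with rest \<open>Poly_Mapping.lookup m k \<noteq> 0\<close> show False
      using sum_eq_0_iff[of "Poly_Mapping.keys m - {i}" "Poly_Mapping.lookup m"] by simp
  qed
  with one have "m = Poly_Mapping.single i 1"
    by (intro poly_mapping_eqI) (auto simp: lookup_single when_def)
  then show "\<exists>i. m = Poly_Mapping.single i 1" ..
qed (auto simp: mdeg_def)

lemma homog_iff_mdeg: "homog k f \<longleftrightarrow> (\<forall>m\<in>Poly_Mapping.keys f. mdeg m = k)"
  by (simp add: homog_def mdeg_def)

lemma homog_zero: "homog k 0"
  by (simp add: homog_iff_mdeg)

lemma homog_add: "homog k f \<Longrightarrow> homog k g \<Longrightarrow> homog k (f + g)"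
  unfolding homog_iff_mdeg by (metis in_keys_add_ipoly)

lemma homog_diff: "homog k f \<Longrightarrow> homog k g \<Longrightarrow> homog k (f - g)"
  using homog_add[of k f "- g"] by (simp add: homog_iff_mdeg)

lemma homog_sum: "(\<And>i. i \<in> S \<Longrightarrow> homog k (f i)) \<Longrightarrow> homog k (sum f S)"
  by (induction S rule: infinite_finite_induct) (auto simp: homog_zero homog_add)

lemma homog_mult: "homog k f \<Longrightarrow> homog l g \<Longrightarrow> homog (k + l) (f * g)"
  unfolding homog_iff_mdeg by (metis in_keys_mult_ipoly mdeg_add)

lemma homog_Xv: "homog 1 (Xv i)"
  by (simp add: homog_iff_mdeg Xv_def mdeg_def)

lemma homog_of_int: "homog 0 (of_int a)"
  by (simp add: homog_iff_mdeg of_int_ipoly mdeg_def)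

lemma homog_of_int_mult: "homog k f \<Longrightarrow> homog k (of_int a * f)"
  using homog_mult[OF homog_of_int, of k f a] by simp

lemma alphaP_closed: "j \<le> n \<Longrightarrow> alphaP A j \<in> carrier (polyR n)"
  unfolding alphaP_def by (intro polyR_closed) auto

lemma homog_alphaP: "homog 1 (alphaP A j)"
  unfolding alphaP_def by (intro homog_sum homog_of_int_mult homog_Xv)

section \<open>The cohomology ring as a quotient\<close>

lemma bott_relations_closed:
  "{Xv j * Xv j - alphaP A j * Xv j | j. j \<in> {1..n}} \<subseteq> carrier (polyR n)"
  by (auto intro!: polyR_closed alphaP_closed)

lemma ideal_bott_ideal: "ideal (bott_ideal n A) (polyR n)"
  unfolding bott_ideal_def by (rule ring.genideal_ideal[OF ring_polyR bott_relations_closed])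

lemma bott_relation_in_ideal: "j \<in> {1..n} \<Longrightarrow> Xv j * Xv j - alphaP A j * Xv j \<in> bott_ideal n A"
  unfolding bott_ideal_def using ring.genideal_self[OF ring_polyR bott_relations_closed[of A n]] by blast

lemma cls_ring_hom: "cls n A \<in> ring_hom (polyR n) (Hcoh n A)"
proof -
  interpret ideal "bott_ideal n A" "polyR n"
    by (rule ideal_bott_ideal)
  have "cls n A = a_r_coset (polyR n) (bott_ideal n A)"
    by (rule ext) (simp add: cls_def)
  then show ?thesis
    unfolding Hcoh_def by (simp add: rcos_ring_hom)
qed

lemma ring_Hcoh: "ring (Hcoh n A)"
proof -
  interpret ideal "bott_ideal n A" "polyR n"
    by (rule ideal_bott_ideal)
  show ?thesis
    unfolding Hcoh_def by (rule quotient_is_ring)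
qed

lemma cls_eq_iff:
  "f \<in> carrier (polyR n) \<Longrightarrow> g \<in> carrier (polyR n) \<Longrightarrow> cls n A f = cls n A g \<longleftrightarrow> f - g \<in> bott_ideal n A"
  using ring.quotient_eq_iff_same_a_r_cos[OF ring_polyR ideal_bott_ideal, of f n g A]
  by (simp add: a_minus_polyR cls_def)

definition deg_ge2_ideal :: "nat \<Rightarrow> ipoly set" where
  "deg_ge2_ideal n = {p \<in> carrier (polyR n). \<forall>m\<in>Poly_Mapping.keys p. 2 \<le> mdeg m}"

lemma ideal_deg_ge2_ideal: "ideal (deg_ge2_ideal n) (polyR n)"
proof (intro subgroup.intro idealI[OF ring_polyR])
  show "deg_ge2_ideal n \<subseteq> carrier (add_monoid (polyR n))"
    by (auto simp: deg_ge2_ideal_def)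
  show "x \<otimes>\<^bsub>add_monoid (polyR n)\<^esub> y \<in> deg_ge2_ideal n"
    if "x \<in> deg_ge2_ideal n" "y \<in> deg_ge2_ideal n" for x y
    using that polyR_add_closed in_keys_add_ipoly by (simp add: deg_ge2_ideal_def) blast
  show "\<one>\<^bsub>add_monoid (polyR n)\<^esub> \<in> deg_ge2_ideal n"
    by (simp add: deg_ge2_ideal_def polyR_zero_closed)
  show "inv\<^bsub>add_monoid (polyR n)\<^esub> x \<in> deg_ge2_ideal n" if x: "x \<in> deg_ge2_ideal n" for x
  proof -
    have "inv\<^bsub>add_monoid (polyR n)\<^esub> x = - x"
      using x a_inv_polyR by (simp add: a_inv_def deg_ge2_ideal_def)
    then show ?thesis
      using x polyR_uminus_closed by (simp add: deg_ge2_ideal_def)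
  qed
  have mult: "x * a \<in> deg_ge2_ideal n" if "a \<in> deg_ge2_ideal n" "x \<in> carrier (polyR n)" for a x
    using that polyR_mult_closed unfolding deg_ge2_ideal_def
    by (auto dest!: in_keys_mult_ipoly simp: mdeg_add)
  show "x \<otimes>\<^bsub>polyR n\<^esub> a \<in> deg_ge2_ideal n" "a \<otimes>\<^bsub>polyR n\<^esub> x \<in> deg_ge2_ideal n"
    if "a \<in> deg_ge2_ideal n" "x \<in> carrier (polyR n)" for a x
    using mult[OF that] by (simp_all add: mult.commute)
qed

lemma bott_ideal_subset_deg_ge2: "bott_ideal n A \<subseteq> deg_ge2_ideal n"
  unfolding bott_ideal_def
proof (rule ring.genideal_minimal[OF ring_polyR ideal_deg_ge2_ideal], safe)
  fix j assume j: "j \<in> {1..n}"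
  have "homog (1 + 1) (Xv j * Xv j - alphaP A j * Xv j)"
    by (intro homog_diff homog_mult homog_Xv homog_alphaP)
  moreover have "Xv j * Xv j - alphaP A j * Xv j \<in> carrier (polyR n)"
    using j by (intro polyR_closed alphaP_closed) auto
  ultimately show "Xv j * Xv j - alphaP A j * Xv j \<in> deg_ge2_ideal n"
    by (auto simp: deg_ge2_ideal_def homog_iff_mdeg)
qed

text \<open>The relations live in degree 2, so distinct linear forms stay distinct in \<open>H\<^sup>2\<close>.\<close>

lemma cls_linear_inj:
  assumes "f \<in> carrier (polyR n)" "g \<in> carrier (polyR n)" "homog 1 f" "homog 1 g"
    and "cls n A f = cls n A g"
  shows "f = g"
proof -
  have "f - g \<in> deg_ge2_ideal n"
    using cls_eq_iff[OF assms(1,2)] assms(5) bott_ideal_subset_deg_ge2 by blast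
  moreover have "homog 1 (f - g)"
    using assms(3,4) by (rule homog_diff)
  ultimately have "Poly_Mapping.keys (f - g) = {}"
    by (force simp: deg_ge2_ideal_def homog_iff_mdeg)
  then show ?thesis
    by simp
qed

definition lin :: "nat \<Rightarrow> (nat \<Rightarrow> int) \<Rightarrow> ipoly" where
  "lin n v = (\<Sum>i\<in>{1..n}. of_int (v i) * Xv i)"

lemma lin_closed: "lin n v \<in> carrier (polyR n)"
  unfolding lin_def by (intro polyR_closed) auto

lemma homog_lin: "homog 1 (lin n v)"
  unfolding lin_def by (intro homog_sum homog_of_int_mult homog_Xv)

lemma lin_cong: "(\<And>k. k \<in> {1..n} \<Longrightarrow> u k = v k) \<Longrightarrow> lin n u = lin n v"
  unfolding lin_def by (intro sum.cong) auto

lemma lin_scale: "lin n (\<lambda>k. t * v k) = of_int t * lin n v"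
  unfolding lin_def by (simp add: sum_distrib_left mult.assoc)

lemma single_Suc0_eq_iff [simp]:
  "Poly_Mapping.single i (Suc 0) = Poly_Mapping.single k (Suc 0) \<longleftrightarrow> i = k"
  by (metis lookup_single_eq lookup_single_not_eq Suc_neq_Zero)

lemma lookup_lin:
  "Poly_Mapping.lookup (lin n v) m = (\<Sum>i\<in>{1..n}. (v i when Poly_Mapping.single i 1 = m))"
  unfolding lin_def by (simp add: lookup_sum of_int_ipoly Xv_def mult_single lookup_single)

lemma lookup_lin_single:
  assumes "k \<in> {1..n}"
  shows "Poly_Mapping.lookup (lin n v) (Poly_Mapping.single k 1) = v k"
proof -
  have "Poly_Mapping.lookup (lin n v) (Poly_Mapping.single k 1) = (\<Sum>i\<in>{1..n}. if i = k then v i else 0)"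
    unfolding lookup_lin by (intro sum.cong) (auto simp: when_def)
  with assms show ?thesis
    by simp
qed

lemma lin_eqD: "lin n v = lin n w \<Longrightarrow> i \<in> {1..n} \<Longrightarrow> v i = w i"
  by (metis lookup_lin_single)

lemma homog_1_eq_lin:
  assumes "f \<in> carrier (polyR n)" "homog 1 f"
  shows "f = lin n (\<lambda>i. Poly_Mapping.lookup f (Poly_Mapping.single i 1))"
proof (rule poly_mapping_eqI)
  fix m
  have "Poly_Mapping.lookup (lin n (\<lambda>i. Poly_Mapping.lookup f (Poly_Mapping.single i 1))) m
      = (\<Sum>i\<in>{1..n}. (Poly_Mapping.lookup f m when Poly_Mapping.single i 1 = m))"
    unfolding lookup_lin by (intro sum.cong) (auto simp: when_def)
  also have "\<dots> = Poly_Mapping.lookup f m"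
  proof (cases "m \<in> Poly_Mapping.keys f")
    case True
    then obtain i where i: "m = Poly_Mapping.single i 1"
      using assms(2) mdeg_eq_1_iff by (auto simp: homog_iff_mdeg)
    have "i \<in> {1..n}"
      using assms(1) True by (auto simp: carrier_polyR i)
    then show ?thesis
      unfolding i by (simp add: when_def)
  next
    case False
    then show ?thesis
      by (simp add: in_keys_iff when_def)
  qed
  finally show "Poly_Mapping.lookup f m = Poly_Mapping.lookup (lin n (\<lambda>i. Poly_Mapping.lookup f (Poly_Mapping.single i 1))) m"
    by simp
qed

context
  fixes n :: nat and H G :: "ipoly \<Rightarrow> 'a" and S :: "('a, 'b) ring_scheme"
  assumes S: "ring S" and H: "H \<in> ring_hom (polyR n) S" and G: "G \<in> ring_hom (polyR n) S"
begin

lemma ring_hom_pair_one: "H 1 = G 1"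
  using ring_hom_one[OF H] ring_hom_one[OF G] by simp

lemma ring_hom_pair_add:
  "p \<in> carrier (polyR n) \<Longrightarrow> q \<in> carrier (polyR n) \<Longrightarrow> p' \<in> carrier (polyR n) \<Longrightarrow> q' \<in> carrier (polyR n) \<Longrightarrow>
    H p = G p' \<Longrightarrow> H q = G q' \<Longrightarrow> H (p + q) = G (p' + q')"
  using ring_hom_add[OF H] ring_hom_add[OF G] by simp

lemma ring_hom_pair_mult:
  "p \<in> carrier (polyR n) \<Longrightarrow> q \<in> carrier (polyR n) \<Longrightarrow> p' \<in> carrier (polyR n) \<Longrightarrow> q' \<in> carrier (polyR n) \<Longrightarrow>
    H p = G p' \<Longrightarrow> H q = G q' \<Longrightarrow> H (p * q) = G (p' * q')"
  using ring_hom_mult[OF H] ring_hom_mult[OF G] by simp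

lemma ring_hom_pair_sum:
  assumes "finite T" "\<And>j. j \<in> T \<Longrightarrow> P j \<in> carrier (polyR n) \<and> Q j \<in> carrier (polyR n) \<and> H (P j) = G (Q j)"
  shows "H (\<Sum>j\<in>T. P j) = G (\<Sum>j\<in>T. Q j)"
  using assms
proof (induction T rule: finite_induct)
  case empty
  show ?case
    using ring_hom_zero[OF H ring_polyR S] ring_hom_zero[OF G ring_polyR S] by simp
next
  case (insert x F)
  then show ?case
    by (simp add: ring_hom_pair_add polyR_sum_closed)
qed

lemma ring_hom_pair_prod:
  assumes "finite T" "\<And>j. j \<in> T \<Longrightarrow> P j \<in> carrier (polyR n) \<and> Q j \<in> carrier (polyR n) \<and> H (P j) = G (Q j)"
  shows "H (\<Prod>j\<in>T. P j) = G (\<Prod>j\<in>T. Q j)"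
  using assms
proof (induction T rule: finite_induct)
  case empty
  then show ?case
    by (simp add: ring_hom_pair_one)
next
  case (insert x F)
  then show ?case
    by (simp add: ring_hom_pair_mult polyR_prod_closed)
qed

lemma ring_hom_pair_of_int: "H (of_int a) = G (of_int a)"
proof (induction a rule: int_induct[where k = 0])
  case base
  show ?case
    using ring_hom_zero[OF H ring_polyR S] ring_hom_zero[OF G ring_polyR S] by simp
next
  case (step1 i)
  then show ?case
    using ring_hom_pair_add[OF polyR_of_int_closed polyR_one_closed polyR_of_int_closed polyR_one_closed
        _ ring_hom_pair_one, of i i] by simp
next
  case (step2 i)
  interpret S: ring S by (rule S)
  have "H (of_int (i - 1)) \<oplus>\<^bsub>S\<^esub> H 1 = H (of_int i)"
    using ring_hom_add[OF H polyR_of_int_closed polyR_one_closed, of "i - 1"] by simp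
  also have "\<dots> = G (of_int i)"
    by (rule step2)
  also have "\<dots> = G (of_int (i - 1)) \<oplus>\<^bsub>S\<^esub> G 1"
    using ring_hom_add[OF G polyR_of_int_closed polyR_one_closed, of "i - 1"] by simp
  finally have "H (of_int (i - 1)) \<oplus>\<^bsub>S\<^esub> H 1 = G (of_int (i - 1)) \<oplus>\<^bsub>S\<^esub> G 1" .
  then show ?case
    using S.add.right_cancel ring_hom_closed[OF H] ring_hom_closed[OF G] ring_hom_pair_one
    by (metis polyR_of_int_closed polyR_one_closed)
qed

end

section \<open>Integer matrices acting on row vectors\<close>

definition vecmat :: "nat \<Rightarrow> (nat \<Rightarrow> int) \<Rightarrow> (nat \<Rightarrow> nat \<Rightarrow> int) \<Rightarrow> nat \<Rightarrow> int" where
  "vecmat n v c k = (\<Sum>i\<in>{1..n}. v i * c i k)"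

text \<open>Invertibility over \<open>\<int>\<close>, encoded as bijectivity of \<open>v \<mapsto> v c\<close> on integer vectors indexed by \<open>{1..n}\<close>.\<close>

definition unimodular :: "nat \<Rightarrow> (nat \<Rightarrow> nat \<Rightarrow> int) \<Rightarrow> bool" where
  "unimodular n c \<longleftrightarrow>
     (\<forall>v w. (\<forall>k\<in>{1..n}. vecmat n v c k = vecmat n w c k) \<longrightarrow> (\<forall>i\<in>{1..n}. v i = w i)) \<and>
     (\<forall>u. \<exists>w. \<forall>k\<in>{1..n}. vecmat n w c k = u k)"

lemma unimodular_inj:
  "unimodular n c \<Longrightarrow> (\<And>k. k \<in> {1..n} \<Longrightarrow> vecmat n v c k = vecmat n w c k) \<Longrightarrow> i \<in> {1..n} \<Longrightarrow> v i = w i"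
  unfolding unimodular_def by blast

lemma unimodular_surj: "unimodular n c \<Longrightarrow> \<exists>w. \<forall>k\<in>{1..n}. vecmat n w c k = u k"
  unfolding unimodular_def by blast

lemma vecmat_scale: "vecmat n (\<lambda>i. t * v i) c k = t * vecmat n v c k"
  by (simp add: vecmat_def sum_distrib_left mult.assoc)

lemma unimodular_common_divisor_iff:
  assumes "unimodular n c"
  shows "(\<forall>k\<in>{1..n}. d dvd vecmat n v c k) \<longleftrightarrow> (\<forall>i\<in>{1..n}. d dvd v i)"
proof
  assume dvd: "\<forall>k\<in>{1..n}. d dvd vecmat n v c k"
  obtain w where w: "\<forall>k\<in>{1..n}. vecmat n w c k = vecmat n v c k div d"
    using unimodular_surj[OF assms, of "\<lambda>k. vecmat n v c k div d"] by blast
  have "\<forall>k\<in>{1..n}. vecmat n (\<lambda>i. d * w i) c k = vecmat n v c k"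
    using w dvd by (simp add: vecmat_scale)
  then have "\<forall>i\<in>{1..n}. d * w i = v i"
    using unimodular_inj[OF assms] by blast
  then show "\<forall>i\<in>{1..n}. d dvd v i"
    by (metis dvd_triv_left)
qed (auto simp: vecmat_def intro!: dvd_sum)

lemma int_dvd_4_cases: "(m :: int) dvd 4 \<Longrightarrow> m \<in> {1, -1, 2, -2, 4, -4}"
proof -
  assume dvd: "m dvd 4"
  then have "\<bar>m\<bar> \<le> 4"
    using dvd_imp_le_int[of 4 m] by simp
  then have "-4 \<le> m" "m \<le> 4"
    by linarith+
  moreover have "m \<noteq> 0" "m \<noteq> 3" "m \<noteq> -3"
    using dvd by auto
  ultimately have "m = 1 \<or> m = -1 \<or> m = 2 \<or> m = -2 \<or> m = 4 \<or> m = -4"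
    by presburger
  then show ?thesis
    by simp
qed

lemma unimodular_scale_cases:
  assumes c: "unimodular n c" and j: "j \<in> {1..n}" and s: "s \<in> {1..n}"
    and aj: "a j = 2" and bs: "b s = 2"
    and rel: "\<And>k. k \<in> {1..n} \<Longrightarrow> 2 * vecmat n a c k = m * b k"
  shows "m \<in> {1, -1, 2, -2, 4, -4}"
    and "m \<in> {1, -1} \<longleftrightarrow> \<not> (\<forall>i\<in>{1..n}. even (a i)) \<and> (\<forall>k\<in>{1..n}. even (b k))"
    and "m \<in> {4, -4} \<longleftrightarrow> (\<forall>i\<in>{1..n}. even (a i)) \<and> \<not> (\<forall>k\<in>{1..n}. even (b k))"
proof -
  have "\<forall>k\<in>{1..n}. m dvd vecmat n (\<lambda>i. 2 * a i) c k"
    by (simp add: vecmat_scale rel)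
  then have m_dvd_2a: "\<forall>i\<in>{1..n}. m dvd 2 * a i"
    using unimodular_common_divisor_iff[OF c, of m "\<lambda>i. 2 * a i"] by simp
  then have "m dvd 2 * a j"
    using j by blast
  with aj show m_cases: "m \<in> {1, -1, 2, -2, 4, -4}"
    using int_dvd_4_cases by simp
  have m_eq: "m = vecmat n a c s"
    using rel[OF s] bs by simp
  have a_even_iff: "(\<forall>i\<in>{1..n}. even (a i)) \<longleftrightarrow> (\<forall>k\<in>{1..n}. even (vecmat n a c k))"
    using unimodular_common_divisor_iff[OF c, of 2 a] by simp
  have m_dvd_a: "\<forall>i\<in>{1..n}. m dvd a i" if b_even: "\<forall>k\<in>{1..n}. even (b k)"
  proof -
    have "m dvd vecmat n a c k" if k: "k \<in> {1..n}" for k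
    proof -
      obtain t where "b k = 2 * t"
        using b_even k by blast
      then have "vecmat n a c k = m * t"
        using rel[OF k] by simp
      then show ?thesis
        by simp
    qed
    then show ?thesis
      using unimodular_common_divisor_iff[OF c, of m a] by blast
  qed
  show "m \<in> {1, -1} \<longleftrightarrow> \<not> (\<forall>i\<in>{1..n}. even (a i)) \<and> (\<forall>k\<in>{1..n}. even (b k))"
  proof
    assume m1: "m \<in> {1, -1}"
    have "\<not> (\<forall>i\<in>{1..n}. even (a i))"
    proof
      assume "\<forall>i\<in>{1..n}. even (a i)"
      then have "even (vecmat n a c s)"
        using a_even_iff s by blast
      with m_eq m1 show False
        by auto
    qed
    moreover have "even (b k)" if "k \<in> {1..n}" for k
    proof -
      have "even (m * b k)"
        using rel[OF that] by (metis dvd_triv_left)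
      with m1 show ?thesis
        by auto
    qed
    ultimately show "\<not> (\<forall>i\<in>{1..n}. even (a i)) \<and> (\<forall>k\<in>{1..n}. even (b k))"
      by blast
  next
    assume h: "\<not> (\<forall>i\<in>{1..n}. even (a i)) \<and> (\<forall>k\<in>{1..n}. even (b k))"
    then obtain i where "i \<in> {1..n}" "odd (a i)"
      by blast
    with h m_dvd_a have "odd m"
      using dvd_trans by blast
    then show "m \<in> {1, -1}"
      using m_cases by auto
  qed
  show "m \<in> {4, -4} \<longleftrightarrow> (\<forall>i\<in>{1..n}. even (a i)) \<and> \<not> (\<forall>k\<in>{1..n}. even (b k))"
  proof
    assume m4: "m \<in> {4, -4}"
    then have four_dvd_m: "2 * 2 dvd m"
      by auto
    have "even (a i)" if "i \<in> {1..n}" for i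
    proof -
      have "2 * 2 dvd 2 * a i"
        using four_dvd_m m_dvd_2a that dvd_trans by blast
      then show ?thesis
        using dvd_mult_cancel_left[of 2 2 "a i"] by simp
    qed
    moreover have "\<not> (\<forall>k\<in>{1..n}. even (b k))"
    proof
      assume "\<forall>k\<in>{1..n}. even (b k)"
      then have "m dvd a j"
        using m_dvd_a j by blast
      with aj m4 show False
        by auto
    qed
    ultimately show "(\<forall>i\<in>{1..n}. even (a i)) \<and> \<not> (\<forall>k\<in>{1..n}. even (b k))"
      by blast
  next
    assume h: "(\<forall>i\<in>{1..n}. even (a i)) \<and> \<not> (\<forall>k\<in>{1..n}. even (b k))"
    then have "even m"
      using a_even_iff m_eq s by blast
    moreover have "m \<notin> {2, -2}"
    proof
      assume "m \<in> {2, -2}"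
      then have "b k = vecmat n a c k \<or> b k = - vecmat n a c k" if "k \<in> {1..n}" for k
        using rel[OF that] by auto
      then show False
        using h a_even_iff by fastforce
    qed
    ultimately show "m \<in> {4, -4}"
      using m_cases by auto
  qed
qed

section \<open>The isomorphism on \<open>H\<^sup>2\<close>\<close>

lemma cls_lin_image:
  assumes \<psi>: "\<psi> \<in> ring_hom (Hcoh n A) (Hcoh n B)"
    and X: "\<forall>i\<in>{1..n}. \<psi> (cls n A (Xv i)) = cls n B (\<Sum>k\<in>{1..n}. of_int (c i k) * Xv k)"
  shows "\<psi> (cls n A (lin n v)) = cls n B (lin n (vecmat n v c))"
proof -
  define Y where "Y i = (\<Sum>k\<in>{1..n}. of_int (c i k) * Xv k)" for i
  define H where "H = \<psi> \<circ> cls n A"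
  have Y_closed: "Y i \<in> carrier (polyR n)" for i
    unfolding Y_def by (intro polyR_closed) auto
  have H: "H \<in> ring_hom (polyR n) (Hcoh n B)"
    unfolding H_def by (rule ring_hom_trans[OF cls_ring_hom \<psi>])
  note pair = ring_hom_pair_of_int[OF ring_Hcoh H cls_ring_hom]
    ring_hom_pair_mult[OF ring_Hcoh H cls_ring_hom] ring_hom_pair_sum[OF ring_Hcoh H cls_ring_hom]
  have "H (Xv i) = cls n B (Y i)" if "i \<in> {1..n}" for i
    using X that by (simp add: H_def Y_def)
  then have "H (of_int (v i) * Xv i) = cls n B (of_int (v i) * Y i)" if "i \<in> {1..n}" for i
    using that by (intro pair(2)) (simp_all add: Y_closed polyR_closed pair(1))
  then have "H (\<Sum>i\<in>{1..n}. of_int (v i) * Xv i) = cls n B (\<Sum>i\<in>{1..n}. of_int (v i) * Y i)"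
    by (intro pair(3)) (simp_all add: Y_closed polyR_closed)
  moreover have "(\<Sum>i\<in>{1..n}. of_int (v i) * Y i) = lin n (vecmat n v c)"
    unfolding Y_def lin_def vecmat_def
    by (simp add: sum_distrib_left sum_distrib_right mult.assoc) (rule sum.swap)
  ultimately show ?thesis
    by (simp add: H_def lin_def)
qed

lemma graded_ring_iso_unimodular:
  assumes iso: "graded_ring_iso n A B \<psi>"
    and X: "\<forall>i\<in>{1..n}. \<psi> (cls n A (Xv i)) = cls n B (\<Sum>k\<in>{1..n}. of_int (c i k) * Xv k)"
  shows "unimodular n c"
proof -
  have \<psi>: "\<psi> \<in> ring_hom (Hcoh n A) (Hcoh n B)" "inj_on \<psi> (carrier (Hcoh n A))"
    using iso by (auto simp: graded_ring_iso_def ring_iso_def bij_betw_def)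
  have inj: "v i = w i" if "\<forall>k\<in>{1..n}. vecmat n v c k = vecmat n w c k" "i \<in> {1..n}" for v w i
  proof -
    have "\<psi> (cls n A (lin n v)) = \<psi> (cls n A (lin n w))"
      using that cls_lin_image[OF \<psi>(1) X] lin_cong[of n "vecmat n v c" "vecmat n w c"] by simp
    then have "cls n A (lin n v) = cls n A (lin n w)"
      using \<psi>(2) ring_hom_closed[OF cls_ring_hom lin_closed] by (meson inj_onD)
    then have "lin n v = lin n w"
      by (rule cls_linear_inj[OF lin_closed lin_closed homog_lin homog_lin])
    then show "v i = w i"
      using that(2) by (rule lin_eqD)
  qed
  have surj: "\<exists>w. \<forall>k\<in>{1..n}. vecmat n w c k = u k" for u
  proof -
    have "cls n B (lin n u) \<in> \<psi> ` Hdeg n A 1"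
      using iso lin_closed homog_lin by (auto simp: graded_ring_iso_def Hdeg_def)
    then obtain f where f: "f \<in> carrier (polyR n)" "homog 1 f" "\<psi> (cls n A f) = cls n B (lin n u)"
      by (auto simp: Hdeg_def)
    define w where "w i = Poly_Mapping.lookup f (Poly_Mapping.single i 1)" for i
    have "f = lin n w"
      unfolding w_def by (rule homog_1_eq_lin[OF f(1,2)])
    then have "cls n B (lin n (vecmat n w c)) = cls n B (lin n u)"
      using f(3) cls_lin_image[OF \<psi>(1) X, of w] by simp
    then have "lin n (vecmat n w c) = lin n u"
      by (rule cls_linear_inj[OF lin_closed lin_closed homog_lin homog_lin])
    then show ?thesis
      using lin_eqD by blast
  qed
  show ?thesis
    unfolding unimodular_def using inj surj by blast
qed

lemma bott_mat_zero: "A \<in> bott_mat n \<Longrightarrow> \<not> (1 \<le> i \<and> i < j \<and> j \<le> n) \<Longrightarrow> A i j = 0"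
  unfolding bott_mat_def by blast

text \<open>Integer coefficients of \<open>2 y\<^sup>A\<^sub>j = 2 x\<^sub>j - \<alpha>\<^sup>A\<^sub>j\<close>.\<close>

definition twice_ycoef :: "(nat \<Rightarrow> nat \<Rightarrow> int) \<Rightarrow> nat \<Rightarrow> nat \<Rightarrow> int" where
  "twice_ycoef A j i = (if i = j then 2 else 0) - A i j"

lemma of_int_twice_ycoef: "of_int (twice_ycoef A j i) = 2 * ycoef A j i"
  by (simp add: twice_ycoef_def ycoef_def)

lemma twice_ycoef_diag: "A \<in> bott_mat n \<Longrightarrow> twice_ycoef A j j = 2"
  by (simp add: twice_ycoef_def bott_mat_zero)

lemma alpha_even_iff_twice_ycoef:
  assumes "A \<in> bott_mat n"
  shows "alpha_even A j \<longleftrightarrow> (\<forall>i\<in>{1..n}. even (twice_ycoef A j i))"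
proof -
  have "even (A i j) \<longleftrightarrow> even (twice_ycoef A j i)" for i
    by (simp add: twice_ycoef_def)
  moreover have "A i j = 0" if "i \<notin> {1..n}" for i
    using assms that by (auto intro: bott_mat_zero)
  ultimately show ?thesis
    unfolding alpha_even_def by (metis even_zero)
qed

lemma lin_twice_ycoef:
  assumes A: "A \<in> bott_mat n" and j: "j \<in> {1..n}"
  shows "lin n (twice_ycoef A j) = 2 * Xv j - alphaP A j"
proof -
  have "of_int (twice_ycoef A j i) * Xv i = (if i = j then 2 * Xv i else 0) - of_int (A i j) * Xv i" for i
    by (cases "i = j") (simp_all add: twice_ycoef_def algebra_simps)
  then have "lin n (twice_ycoef A j) = (\<Sum>i\<in>{1..n}. if i = j then 2 * Xv i else 0) - (\<Sum>i\<in>{1..n}. of_int (A i j) * Xv i)"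
    unfolding lin_def by (simp only: sum_subtractf)
  also have "(\<Sum>i\<in>{1..n}. of_int (A i j) * Xv i) = alphaP A j"
    unfolding alphaP_def using j
    by (intro sum.mono_neutral_right) (auto simp: bott_mat_zero[OF A])
  finally show ?thesis
    using j by simp
qed

lemma ycoef_relation_twice:
  assumes B: "B \<in> bott_mat n" and s: "s \<in> {1..n}"
    and Y: "\<forall>k\<in>{1..n}. (\<Sum>i\<in>{1..n}. ycoef A j i * of_int (c i k)) = q * ycoef B s k"
  defines "m \<equiv> vecmat n (twice_ycoef A j) c s"
  shows "q = of_int m / 2"
    and "\<And>k. k \<in> {1..n} \<Longrightarrow> 2 * vecmat n (twice_ycoef A j) c k = m * twice_ycoef B s k"
proof -
  have rat: "of_int (vecmat n (twice_ycoef A j) c k) = q * of_int (twice_ycoef B s k)"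
    if "k \<in> {1..n}" for k
  proof -
    have "of_int (vecmat n (twice_ycoef A j) c k) = (\<Sum>i\<in>{1..n}. 2 * ycoef A j i * of_int (c i k))"
      by (simp add: vecmat_def of_int_twice_ycoef)
    also have "\<dots> = 2 * (\<Sum>i\<in>{1..n}. ycoef A j i * of_int (c i k))"
      by (simp add: sum_distrib_left mult.assoc)
    also have "\<dots> = q * of_int (twice_ycoef B s k)"
      using Y that by (simp add: of_int_twice_ycoef)
    finally show ?thesis .
  qed
  show q: "q = of_int m / 2"
    using rat[OF s] twice_ycoef_diag[OF B] by (simp add: m_def)
  show "2 * vecmat n (twice_ycoef A j) c k = m * twice_ycoef B s k" if "k \<in> {1..n}" for k
  proof -
    have "(of_int (2 * vecmat n (twice_ycoef A j) c k) :: rat) = of_int (m * twice_ycoef B s k)"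
      using rat[OF that] q by simp
    then show ?thesis
      by (rule of_int_eq_iff[THEN iffD1])
  qed
qed

lemma ycoef_scale_cases:
  assumes A: "A \<in> bott_mat n" and B: "B \<in> bott_mat n" and c: "unimodular n c"
    and j: "j \<in> {1..n}" and s: "s \<in> {1..n}"
    and Y: "\<forall>k\<in>{1..n}. (\<Sum>i\<in>{1..n}. ycoef A j i * of_int (c i k)) = q * ycoef B s k"
  shows "q \<in> {1/2, -1/2, 1, -1, 2, -2}"
    and "q \<in> {1/2, -1/2} \<longleftrightarrow> \<not> alpha_even A j \<and> alpha_even B s"
    and "q \<in> {2, -2} \<longleftrightarrow> alpha_even A j \<and> \<not> alpha_even B s"
proof -
  define m where "m = vecmat n (twice_ycoef A j) c s"
  have q: "q = of_int m / 2"
    using ycoef_relation_twice(1)[OF B s Y] by (simp add: m_def)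
  note cases = unimodular_scale_cases[OF c j s twice_ycoef_diag[OF A] twice_ycoef_diag[OF B]
      ycoef_relation_twice(2)[OF B s Y, folded m_def]]
  show "q \<in> {1/2, -1/2, 1, -1, 2, -2}"
    using cases(1) by (auto simp: q)
  show "q \<in> {1/2, -1/2} \<longleftrightarrow> \<not> alpha_even A j \<and> alpha_even B s"
    using cases(2) by (auto simp: q alpha_even_iff_twice_ycoef[OF A] alpha_even_iff_twice_ycoef[OF B])
  show "q \<in> {2, -2} \<longleftrightarrow> alpha_even A j \<and> \<not> alpha_even B s"
    using cases(3) by (auto simp: q alpha_even_iff_twice_ycoef[OF A] alpha_even_iff_twice_ycoef[OF B])
qed

section \<open>The Pontrjagin class\<close>

lemma cls_one_plus_alphaP_sq:
  assumes j: "j \<in> {1..n}"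
  shows "cls n A (1 + alphaP A j ^ 2) = cls n A (1 + (2 * Xv j - alphaP A j) ^ 2)"
proof -
  have "of_int (-4) \<otimes>\<^bsub>polyR n\<^esub> (Xv j * Xv j - alphaP A j * Xv j) \<in> bott_ideal n A"
    using ideal.I_l_closed[OF ideal_bott_ideal bott_relation_in_ideal[OF j] polyR_of_int_closed] .
  moreover have "(1 + alphaP A j ^ 2) - (1 + (2 * Xv j - alphaP A j) ^ 2)
      = of_int (-4) * (Xv j * Xv j - alphaP A j * Xv j)"
    by (simp add: algebra_simps power2_eq_square)
  ultimately show ?thesis
    using j by (subst cls_eq_iff) (auto simp: power2_eq_square intro!: polyR_closed alphaP_closed
        polyR_of_int_closed[of 2, simplified])
qed

lemma pontr_factor_image:
  assumes \<psi>: "\<psi> \<in> ring_hom (Hcoh n A) (Hcoh n B)"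
    and X: "\<forall>i\<in>{1..n}. \<psi> (cls n A (Xv i)) = cls n B (\<Sum>k\<in>{1..n}. of_int (c i k) * Xv k)"
    and A: "A \<in> bott_mat n" and B: "B \<in> bott_mat n" and j: "j \<in> {1..n}" and s: "s \<in> {1..n}"
    and Y: "\<forall>k\<in>{1..n}. (\<Sum>i\<in>{1..n}. ycoef A j i * of_int (c i k)) = q * ycoef B s k"
    and q: "q \<in> {1, -1}"
  shows "\<psi> (cls n A (1 + alphaP A j ^ 2)) = cls n B (1 + alphaP B s ^ 2)"
proof -
  define m where "m = vecmat n (twice_ycoef A j) c s"
  have "q = of_int m / 2"
    using ycoef_relation_twice(1)[OF B s Y] by (simp add: m_def)
  with q have "m = 2 \<or> m = -2"
    by auto
  then obtain t where m: "m = 2 * t" and t: "t * t = 1"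
    by auto
  define La where "La = lin n (twice_ycoef A j)"
  define Lb where "Lb = of_int t * lin n (twice_ycoef B s)"
  define H where "H = \<psi> \<circ> cls n A"
  have H: "H \<in> ring_hom (polyR n) (Hcoh n B)"
    unfolding H_def by (rule ring_hom_trans[OF cls_ring_hom \<psi>])
  have closed: "La \<in> carrier (polyR n)" "Lb \<in> carrier (polyR n)"
    unfolding La_def Lb_def by (auto intro: polyR_closed lin_closed)
  have "vecmat n (twice_ycoef A j) c k = t * twice_ycoef B s k" if "k \<in> {1..n}" for k
    using ycoef_relation_twice(2)[OF B s Y that] by (simp add: m_def[symmetric] m)
  then have "H La = cls n B Lb"
    using cls_lin_image[OF \<psi> X] lin_cong[of n _ "\<lambda>k. t * twice_ycoef B s k"]
    by (simp add: H_def La_def Lb_def lin_scale)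
  then have "H (1 + La * La) = cls n B (1 + Lb * Lb)"
    using closed
    by (intro ring_hom_pair_add[OF ring_Hcoh H cls_ring_hom] ring_hom_pair_mult[OF ring_Hcoh H cls_ring_hom])
      (simp_all add: ring_hom_pair_one[OF ring_Hcoh H cls_ring_hom] polyR_closed)
  moreover have "Lb * Lb = lin n (twice_ycoef B s) ^ 2"
    using t by (simp add: Lb_def power2_eq_square algebra_simps flip: of_int_mult)
  ultimately show ?thesis
    using cls_one_plus_alphaP_sq[OF j, of A] cls_one_plus_alphaP_sq[OF s, of B]
    by (simp add: H_def La_def lin_twice_ycoef[OF A j] lin_twice_ycoef[OF B s] power2_eq_square)
qed

lemma pontr_image:
  assumes \<psi>: "\<psi> \<in> ring_hom (Hcoh n A) (Hcoh n B)"
    and X: "\<forall>i\<in>{1..n}. \<psi> (cls n A (Xv i)) = cls n B (\<Sum>k\<in>{1..n}. of_int (c i k) * Xv k)"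
    and A: "A \<in> bott_mat n" and B: "B \<in> bott_mat n" and \<sigma>: "bij_betw \<sigma> {1..n} {1..n}"
    and Y: "\<forall>j\<in>{1..n}. \<forall>k\<in>{1..n}.
              (\<Sum>i\<in>{1..n}. ycoef A j i * of_int (c i k)) = q j * ycoef B (\<sigma> j) k"
    and q: "\<forall>j\<in>{1..n}. q j \<in> {1, -1}"
  shows "\<psi> (pontr n A) = pontr n B"
proof -
  have H: "\<psi> \<circ> cls n A \<in> ring_hom (polyR n) (Hcoh n B)"
    by (rule ring_hom_trans[OF cls_ring_hom \<psi>])
  have "\<psi> (cls n A (1 + alphaP A j ^ 2)) = cls n B (1 + alphaP B (\<sigma> j) ^ 2)" if "j \<in> {1..n}" for j
    using that Y q bij_betwE[OF \<sigma>] by (intro pontr_factor_image[OF \<psi> X A B]) auto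
  then have "(\<psi> \<circ> cls n A) (\<Prod>j\<in>{1..n}. 1 + alphaP A j ^ 2) = cls n B (\<Prod>j\<in>{1..n}. 1 + alphaP B (\<sigma> j) ^ 2)"
    using bij_betwE[OF \<sigma>]
    by (intro ring_hom_pair_prod[OF ring_Hcoh H cls_ring_hom])
      (auto simp: power2_eq_square intro!: polyR_closed alphaP_closed)
  also have "(\<Prod>j\<in>{1..n}. 1 + alphaP B (\<sigma> j) ^ 2) = (\<Prod>j\<in>{1..n}. 1 + alphaP B j ^ 2)"
    by (rule prod.reindex_bij_betw[OF \<sigma>])
  finally show ?thesis
    by (simp add: pontr_def)
qed

theorem lemma4p2:
  fixes n :: nat and A B :: "nat \<Rightarrow> nat \<Rightarrow> int" and \<psi> :: "ipoly set \<Rightarrow> ipoly set"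
    and c :: "nat \<Rightarrow> nat \<Rightarrow> int" and \<sigma> :: "nat \<Rightarrow> nat" and q :: "nat \<Rightarrow> rat"
  assumes "A \<in> bott_mat n" and "B \<in> bott_mat n"
    and "graded_ring_iso n A B \<psi>"
    and "\<forall>i\<in>{1..n}. \<psi> (cls n A (Xv i)) = cls n B (\<Sum>k\<in>{1..n}. of_int (c i k) * Xv k)"
    and "bij_betw \<sigma> {1..n} {1..n}"
    and "\<forall>j\<in>{1..n}. q j \<noteq> 0"
    and "\<forall>j\<in>{1..n}. \<forall>k\<in>{1..n}.
           (\<Sum>i\<in>{1..n}. ycoef A j i * of_int (c i k)) = q j * ycoef B (\<sigma> j) k"
  shows "(\<forall>j\<in>{1..n}. q j \<in> {1/2, -1/2, 1, -1, 2, -2})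
       \<and> (\<forall>j\<in>{1..n}. q j \<in> {1/2, -1/2} \<longleftrightarrow> \<not> alpha_even A j \<and> alpha_even B (\<sigma> j))
       \<and> (\<forall>j\<in>{1..n}. q j \<in> {2, -2} \<longleftrightarrow> alpha_even A j \<and> \<not> alpha_even B (\<sigma> j))
       \<and> ((\<forall>j\<in>{1..n}. q j \<in> {1, -1}) \<longrightarrow> \<psi> (pontr n A) = pontr n B)"
proof -
  note A = assms(1) and B = assms(2) and X = assms(4) and \<sigma> = assms(5) and Y = assms(7)
  have \<psi>: "\<psi> \<in> ring_hom (Hcoh n A) (Hcoh n B)"
    using assms(3) by (simp add: graded_ring_iso_def ring_iso_def)
  have c: "unimodular n c"
    using assms(3) X by (rule graded_ring_iso_unimodular)
  have "q j \<in> {1/2, -1/2, 1, -1, 2, -2}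
      \<and> (q j \<in> {1/2, -1/2} \<longleftrightarrow> \<not> alpha_even A j \<and> alpha_even B (\<sigma> j))
      \<and> (q j \<in> {2, -2} \<longleftrightarrow> alpha_even A j \<and> \<not> alpha_even B (\<sigma> j))" if j: "j \<in> {1..n}" for j
    using ycoef_scale_cases[OF A B c j bij_betwE[OF \<sigma>, rule_format, OF j]] Y j by blast
  moreover have "(\<forall>j\<in>{1..n}. q j \<in> {1, -1}) \<longrightarrow> \<psi> (pontr n A) = pontr n B"
    using pontr_image[OF \<psi> X A B \<sigma> Y] by blast
  ultimately show ?thesis
    by blast
qed

end
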